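(* Let $\widehat G$ be a countable discrete abelian group, $m$ a probability measure on $\widehat G$ with $m(\{\chi\})>0$ for all $\chi$, and $m^{\mathbf D}$ the product measure on $\widehat G^{\mathbf D}$. For $g,g'\in\widehat G_{fr}$, the measures $g_*m^{\mathbf D}$ and $g'_*m^{\mathbf D}$ are mutually singular if and only if there exists $d\in\mathbf D$ with $g(d)_*m\ne g'(d)_*m$; otherwise they are equal. If $\widehat G$ is torsion free, then the measures $g_*m^{\mathbf D}$, $g\in\widehat G_{fr}$, are pairwise mutually singular (for distinct $g$).
   Context: $\mathbf D=\{a/2^n:n\ge1,0\le a\le2^n-1\}\subset[0,1)$. A standard dyadic partition (s.d.p.) is $0=d_1<\dots<d_{n+1}=1$ with each $(d_j,d_{j+1})$ of the form $(a/2^k,(a+1)/2^k)$. $\widehat G_{fr}$ is the group (pointwise multiplication) of maps $g:\mathbf D\to\widehat G$ for which there is an s.d.p. such that $g$ is constant on each $[d_j,d_{j+1})\cap\mathbf D$. $\widehat G_{fr}$ acts on $\widehat G^{\mathbf D}$ by $(gy)(d)=g(d)y(d)$, and $g_*m^{\mathbf D}$ is the pushforward of $m^{\mathbf D}$ under $y\mapsto gy$; for $\chi\in\widehat G$, $\chi_*m$ is the pushforward of $m$ under translation by $\chi$. *)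

theory Defs
  imports "HOL-Probability.Probability"
begin

definition dyadics :: "real set" where
  "dyadics = {real a / 2 ^ n | a n. 1 \<le> n \<and> a \<le> 2 ^ n - 1}"

definition std_dyadic_partition :: "real list \<Rightarrow> bool" where
  "std_dyadic_partition ds \<longleftrightarrow>
     2 \<le> length ds \<and> ds ! 0 = 0 \<and> last ds = 1 \<and>
     (\<forall>j. j + 1 < length ds \<longrightarrow> ds ! j < ds ! (j + 1) \<and>
        (\<exists>a k::nat. ds ! j = real a / 2 ^ k \<and> ds ! (j + 1) = (real a + 1) / 2 ^ k))"

definition Gfr :: "(real \<Rightarrow> 'g) set" where
  "Gfr = {g. g \<in> extensional dyadics \<and>
          (\<exists>ds. std_dyadic_partition ds \<and>
             (\<forall>j. j + 1 < length ds \<longrightarrow>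
                (\<exists>c. \<forall>d\<in>dyadics. ds ! j \<le> d \<and> d < ds ! (j + 1) \<longrightarrow> g d = c)))}"

definition prodD :: "'g measure \<Rightarrow> (real \<Rightarrow> 'g) measure" where
  "prodD m = PiM dyadics (\<lambda>_. m)"

text \<open>Push-forward g_* m^D under y \<mapsto> g y, (g y)(d) = g(d) y(d) (group written additively).\<close>
definition push_fr :: "(real \<Rightarrow> 'g::ab_group_add) \<Rightarrow> 'g measure \<Rightarrow> (real \<Rightarrow> 'g) measure" where
  "push_fr g m = distr (prodD m) (prodD m) (\<lambda>y. \<lambda>d\<in>dyadics. g d + y d)"

definition translate :: "'g::ab_group_add \<Rightarrow> 'g measure \<Rightarrow> 'g measure" where
  "translate c m = distr m m (\<lambda>x. c + x)"

definition mutually_singular :: "'a measure \<Rightarrow> 'a measure \<Rightarrow> bool" where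
  "mutually_singular M N \<longleftrightarrow>
     (\<exists>A \<in> sets M. A \<in> sets N \<and> emeasure M A = 0 \<and> emeasure N (space N - A) = 0)"

definition torsion_free :: "'g::ab_group_add itself \<Rightarrow> bool" where
  "torsion_free _ \<longleftrightarrow> (\<forall>(x::'g) (n::nat). 0 < n \<longrightarrow> (\<Sum>i<n. x) = 0 \<longrightarrow> x = 0)"

end

(*
  Translating coordinatewise, g_* m^D is the product of the translates g(d)_* m,
  so equal translates give equal measures.  If the translates differ at d, note that g and g'
  are both constant on [d, h) for some h > d, an interval containing infinitely many dyadics.
  Projecting onto these coordinates maps the two measures to infinite i.i.d. products of two
  different laws P and Q.  Choose A with P A \<noteq> Q A: by Hoeffding's inequality and
  Borel-Cantelli, the empirical frequency of A converges almost surely to P A under the first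
  product and to Q A under the second, so the two products, and hence the original measures,
  are mutually singular.  In a torsion-free group, c_* m = c'_* m with c \<noteq> c' would give the
  infinitely many distinct points n (c - c') all the same positive mass m {0}.
*)
theory Submission
  imports Defs "HOL-Probability.Hoeffding"
begin

lemma indep_vars_PiM_components:
  assumes M: "\<And>i. i \<in> I \<Longrightarrow> prob_space (M i)"
  shows "prob_space.indep_vars (PiM I M) M (\<lambda>i \<omega>. \<omega> i) I"
proof -
  interpret prob_space "PiM I M" by (rule prob_space_PiM) (use M in auto)
  show ?thesis
  proof (cases "I = {}")
    case True
    then show ?thesis unfolding indep_vars_def indep_sets_def by simp
  next
    case False
    have "distr (PiM I M) (PiM I M) (\<lambda>\<omega>. \<lambda>i\<in>I. \<omega> i) = PiM I M"
      by (subst distr_cong[where g = "\<lambda>\<omega>. \<omega>", OF refl refl]) (auto simp: space_PiM)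
    with False M show ?thesis
      by (subst indep_vars_iff_distr_eq_PiM') (auto intro!: PiM_cong simp: distr_PiM_component)
  qed
qed

lemma distr_PiM_coordinatewise:
  assumes M: "\<And>i. i \<in> I \<Longrightarrow> prob_space (M i)"
    and f: "\<And>i. i \<in> I \<Longrightarrow> f i \<in> measurable (M i) (N i)"
  shows "distr (PiM I M) (PiM I N) (\<lambda>\<omega>. \<lambda>i\<in>I. f i (\<omega> i)) = PiM I (\<lambda>i. distr (M i) (N i) (f i))"
    (is "distr ?M ?N ?f = PiM I ?D")
proof (rule measure_eqI_PiM_infinite[symmetric, where M = ?D])
  have f_meas: "?f \<in> measurable ?M ?N"
  proof (rule measurable_PiM_single')
    fix i assume i: "i \<in> I"
    have "(\<lambda>\<omega>. \<omega> i) \<in> measurable ?M (M i)" using i by simp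
    with f[OF i] i show "(\<lambda>\<omega>. ?f \<omega> i) \<in> measurable ?M (N i)" by (simp add: measurable_compose)
  qed (use f in \<open>auto simp: space_PiM PiE_iff intro: measurable_space\<close>)
  show "sets (distr ?M ?N ?f) = sets (PiM I ?D)" by (simp cong: sets_PiM_cong)
  interpret prob_space "PiM I ?D"
    by (rule prob_space_PiM) (use M f in \<open>auto intro: prob_space.prob_space_distr\<close>)
  show "finite_measure (PiM I ?D)" by unfold_locales
  fix J A assume J: "finite J" "J \<subseteq> I" and A: "\<And>i. i \<in> J \<Longrightarrow> A i \<in> sets (?D i)"
  have "PiM I ?D (prod_emb I ?D J (Pi\<^sub>E J A))
      = (\<Prod>i\<in>J. emeasure (M i) (f i -` A i \<inter> space (M i)))"
    using J A M f by (subst emeasure_PiM_emb)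
      (auto intro: prob_space.prob_space_distr intro!: prod.cong simp: emeasure_distr)
  also have "\<dots> = ?M (prod_emb I M J (\<Pi>\<^sub>E i\<in>J. f i -` A i \<inter> space (M i)))"
    using J A M f by (subst emeasure_PiM_emb) auto
  also have "prod_emb I M J (\<Pi>\<^sub>E i\<in>J. f i -` A i \<inter> space (M i))
      = ?f -` prod_emb I ?D J (Pi\<^sub>E J A) \<inter> space ?M"
  proof (intro set_eqI iffI)
    fix \<omega> assume "\<omega> \<in> prod_emb I M J (\<Pi>\<^sub>E i\<in>J. f i -` A i \<inter> space (M i))"
    with J measurable_space[OF f] show "\<omega> \<in> ?f -` prod_emb I ?D J (Pi\<^sub>E J A) \<inter> space ?M"
      by (auto simp: prod_emb_def space_PiM PiE_iff)
  next
    fix \<omega> assume "\<omega> \<in> ?f -` prod_emb I ?D J (Pi\<^sub>E J A) \<inter> space ?M"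
    with J show "\<omega> \<in> prod_emb I M J (\<Pi>\<^sub>E i\<in>J. f i -` A i \<inter> space (M i))"
      by (auto simp: prod_emb_def space_PiM PiE_iff subset_eq)
  qed
  also have "?M \<dots> = distr ?M ?N ?f (prod_emb I ?D J (Pi\<^sub>E J A))"
  proof -
    have "prod_emb I ?D J (Pi\<^sub>E J A) \<in> sets (PiM I ?D)"
      by (rule sets_PiM_I) (use J A in auto)
    also have "sets (PiM I ?D) = sets ?N" by (rule sets_PiM_cong) auto
    finally show ?thesis by (rule emeasure_distr[OF f_meas, symmetric])
  qed
  finally show "PiM I ?D (prod_emb I ?D J (Pi\<^sub>E J A))
      = distr ?M ?N ?f (prod_emb I ?D J (Pi\<^sub>E J A))" .
qed simp

section \<open>Mutual singularity of infinite i.i.d. products\<close>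

lemma mutually_singular_vimage:
  assumes sets_eq: "sets M = sets N" and f: "f \<in> measurable M K"
    and "mutually_singular (distr M K f) (distr N K f)"
  shows "mutually_singular M N"
proof -
  obtain A where A: "A \<in> sets K" "emeasure (distr M K f) A = 0"
    "emeasure (distr N K f) (space K - A) = 0"
    using assms(3) by (auto simp: mutually_singular_def)
  have f': "f \<in> measurable N K" using f by (simp add: measurable_cong_sets[OF sets_eq refl])
  have space_eq: "space M = space N" by (rule sets_eq_imp_space_eq[OF sets_eq])
  have "space N - (f -` A \<inter> space M) = f -` (space K - A) \<inter> space N"
    using measurable_space[OF f'] space_eq by auto
  with A f f' show ?thesis
    unfolding mutually_singular_def sets_eq
    by (intro bexI[of _ "f -` A \<inter> space M"]) (auto simp: emeasure_distr space_eq)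
qed

lemma not_mutually_singular_self:
  assumes "emeasure M (space M) \<noteq> 0"
  shows "\<not> mutually_singular M M"
proof
  assume "mutually_singular M M"
  then obtain A where "A \<in> sets M" "emeasure M A = 0" "emeasure M (space M - A) = 0"
    by (auto simp: mutually_singular_def)
  then have "emeasure M (space M) = 0"
    by (metis emeasure_Diff_null_set null_setsI sets.top)
  with assms show False ..
qed

definition empirical_freq :: "'a set \<Rightarrow> nat \<Rightarrow> (nat \<Rightarrow> 'a) \<Rightarrow> real" where
  "empirical_freq A n \<omega> = (\<Sum>i<n. indicator A (\<omega> i)) / n"

lemma measurable_empirical_freq [measurable]:
  assumes [measurable]: "A \<in> sets P"
  shows "empirical_freq A n \<in> borel_measurable (PiM UNIV (\<lambda>_::nat. P))"
  unfolding empirical_freq_def by measurable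

lemma PiM_iid_empirical_freq_deviation:
  assumes P: "prob_space P" and A: "A \<in> sets P" and \<epsilon>: "\<epsilon> \<ge> 0"
  shows "measure (PiM UNIV (\<lambda>_::nat. P))
           {\<omega> \<in> space (PiM UNIV (\<lambda>_. P)). \<epsilon> \<le> \<bar>empirical_freq A n \<omega> - measure P A\<bar>}
         \<le> 2 * exp (- 2 * n * \<epsilon>\<^sup>2)"
proof -
  let ?Q = "PiM UNIV (\<lambda>_::nat. P)"
  interpret Q: prob_space ?Q by (rule prob_space_PiM) (use P in auto)
  define X where "X = (\<lambda>(i::nat) \<omega>. indicator A (\<omega> i) :: real)"
  have [measurable]: "X i \<in> borel_measurable ?Q" for i
    unfolding X_def using A by measurable
  have distr_X: "distr ?Q borel (X i) = distr P borel (indicator A)" for i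
    using distr_distr[of "indicator A :: _ \<Rightarrow> real" P borel "\<lambda>\<omega>. \<omega> i" ?Q]
      distr_PiM_component[of UNIV "\<lambda>_. P" i] A P
    by (simp add: X_def o_def)
  have "Q.indep_vars (\<lambda>_. borel) X UNIV"
    unfolding X_def
    by (rule Q.indep_vars_compose2[OF indep_vars_PiM_components]) (use P A in auto)
  then interpret H: Hoeffding_ineq_iid ?Q "{..<n}" X "X 0" 0 1 "Q.expectation (X 0)"
  proof unfold_locales
    show "AE \<omega> in ?Q. X 0 \<omega> \<in> {0..1}" by (simp add: X_def)
  qed (auto intro: Q.indep_vars_subset simp: distr_X)
  have "Q.expectation (X 0) = integral\<^sup>L (distr ?Q P (\<lambda>\<omega>. \<omega> 0)) (indicator A)"
    unfolding X_def using A by (subst integral_distr) auto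
  also have "distr ?Q P (\<lambda>\<omega>. \<omega> 0) = P"
    by (rule distr_PiM_component) (use P in auto)
  also have "integral\<^sup>L P (indicator A) = measure P A"
    using A by simp
  finally have mean: "Q.expectation (X 0) = measure P A" .
  show ?thesis
  proof (cases "n = 0")
    case True
    then show ?thesis using Q.prob_le_1 by (simp add: order.trans[OF _ one_le_numeral])
  next
    case False
    then have "{..<n} \<noteq> {}" by auto
    with H.Hoeffding_ineq_abs_ge'[OF \<epsilon> zero_less_one] mean show ?thesis
      by (simp add: X_def empirical_freq_def)
  qed
qed

lemma AE_PiM_iid_empirical_freq_close:
  assumes P: "prob_space P" and A: "A \<in> sets P" and \<epsilon>: "\<epsilon> > 0"
  shows "AE \<omega> in PiM UNIV (\<lambda>_::nat. P).
           eventually (\<lambda>n. \<bar>empirical_freq A n \<omega> - measure P A\<bar> < \<epsilon>) sequentially"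
proof -
  let ?Q = "PiM UNIV (\<lambda>_::nat. P)"
  interpret Q: prob_space ?Q by (rule prob_space_PiM) (use P in auto)
  define B where "B n = {\<omega> \<in> space ?Q. \<epsilon> \<le> \<bar>empirical_freq A n \<omega> - measure P A\<bar>}" for n
  have [measurable]: "B n \<in> sets ?Q" for n
    unfolding B_def using A by measurable
  have bound: "Q.prob (B n) \<le> 2 * exp (- 2 * \<epsilon>\<^sup>2) ^ n" for n
  proof -
    have "exp (- 2 * real n * \<epsilon>\<^sup>2) = exp (- 2 * \<epsilon>\<^sup>2) ^ n"
      by (simp add: exp_of_nat_mult[symmetric] algebra_simps)
    then show ?thesis
      unfolding B_def using PiM_iid_empirical_freq_deviation[OF P A, of \<epsilon> n] \<epsilon> by simp
  qed
  have "summable (\<lambda>n. 2 * exp (- 2 * \<epsilon>\<^sup>2) ^ n)"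
    using \<epsilon> by (intro summable_mult summable_geometric) simp
  then have "summable (\<lambda>n. Q.prob (B n))"
    by (rule summable_comparison_test'[where N = 0]) (use bound in simp)
  then have "AE \<omega> in ?Q. eventually (\<lambda>n. \<omega> \<in> space ?Q - B n) sequentially"
    by (intro borel_cantelli_AE1) (simp_all add: Q.emeasure_eq_measure)
  then show ?thesis
    by (rule AE_mp) (intro AE_I2 impI, auto simp: B_def elim: eventually_mono)
qed

lemma PiM_iid_mutually_singular:
  assumes P: "prob_space P" and Q: "prob_space Q" and sets_eq: "sets P = sets Q" and "P \<noteq> Q"
  shows "mutually_singular (PiM UNIV (\<lambda>_::nat. P)) (PiM UNIV (\<lambda>_::nat. Q))"
proof -
  interpret P: prob_space P by (rule P)
  interpret Q: prob_space Q by (rule Q)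
  obtain A where A: "A \<in> sets P" and "measure P A \<noteq> measure Q A"
  proof (rule ccontr)
    assume "\<not> thesis"
    with that have "measure P A = measure Q A" if "A \<in> sets P" for A
      using that by blast
    then have "P = Q"
      using sets_eq P.emeasure_eq_measure Q.emeasure_eq_measure
      by (intro measure_eqI) auto
    with \<open>P \<noteq> Q\<close> show False ..
  qed
  define \<epsilon> where "\<epsilon> = \<bar>measure P A - measure Q A\<bar> / 2"
  have "\<epsilon> > 0" using \<open>measure P A \<noteq> measure Q A\<close> by (simp add: \<epsilon>_def)
  let ?PP = "PiM UNIV (\<lambda>_::nat. P)" and ?QQ = "PiM UNIV (\<lambda>_::nat. Q)"
  have sets_PP: "sets ?PP = sets ?QQ" by (rule sets_PiM_cong) (auto simp: sets_eq)
  define S where "S = {\<omega> \<in> space ?QQ.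
    eventually (\<lambda>n. \<bar>empirical_freq A n \<omega> - measure Q A\<bar> < \<epsilon>) sequentially}"
  have "S \<in> sets ?QQ"
    unfolding S_def eventually_sequentially using A sets_eq by measurable
  have "AE \<omega> in ?QQ. \<omega> \<in> S"
    using AE_PiM_iid_empirical_freq_close[OF Q _ \<open>\<epsilon> > 0\<close>, of A] A sets_eq
    by (auto simp: S_def)
  have "AE \<omega> in ?PP. \<omega> \<notin> S"
  proof (rule AE_mp[OF AE_PiM_iid_empirical_freq_close[OF P A \<open>\<epsilon> > 0\<close>]], intro AE_I2 impI notI)
    fix \<omega>
    assume P_close: "eventually (\<lambda>n. \<bar>empirical_freq A n \<omega> - measure P A\<bar> < \<epsilon>) sequentially"
      and "\<omega> \<in> S"
    then have Q_close: "eventually (\<lambda>n. \<bar>empirical_freq A n \<omega> - measure Q A\<bar> < \<epsilon>) sequentially"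
      by (simp add: S_def)
    from P_close Q_close
    have "eventually (\<lambda>n. \<bar>measure P A - measure Q A\<bar> < 2 * \<epsilon>) sequentially"
      by eventually_elim linarith
    then show False by (simp add: \<epsilon>_def)
  qed
  have "space ?PP = space ?QQ" by (rule sets_eq_imp_space_eq[OF sets_PP])
  then have "emeasure ?PP S = 0"
    using \<open>AE \<omega> in ?PP. \<omega> \<notin> S\<close> \<open>S \<in> sets ?QQ\<close> sets_PP
    by (subst (asm) AE_iff_measurable[of S]) (auto simp: S_def)
  moreover have "emeasure ?QQ (space ?QQ - S) = 0"
    using \<open>AE \<omega> in ?QQ. \<omega> \<in> S\<close> \<open>S \<in> sets ?QQ\<close>
    by (subst (asm) AE_iff_measurable[of "space ?QQ - S"]) auto
  ultimately show ?thesis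
    unfolding mutually_singular_def using \<open>S \<in> sets ?QQ\<close> sets_PP by auto
qed

section \<open>Dyadic rationals and the group of step functions\<close>

lemma dyadics_subset: "dyadics \<subseteq> {0..<1}"
proof
  fix d assume "d \<in> dyadics"
  then obtain a n :: nat where d: "d = real a / 2 ^ n" and "a \<le> 2 ^ n - 1"
    by (auto simp: dyadics_def)
  moreover have "(0::nat) < 2 ^ n" by simp
  ultimately have "a < 2 ^ n" by linarith
  then have "real a < 2 ^ n"
    using of_nat_less_iff[of a "2 ^ n"] by simp
  then show "d \<in> {0..<1}" by (simp add: d)
qed

lemma eventually_dyadics_add_inverse_pow:
  assumes "d \<in> dyadics"
  shows "eventually (\<lambda>k. d + 1 / 2 ^ k \<in> dyadics) sequentially"
proof -
  obtain a n :: nat where d: "d = real a / 2 ^ n" and "1 \<le> n" and "a \<le> 2 ^ n - 1"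
    using assms by (auto simp: dyadics_def)
  have "d + 1 / 2 ^ k \<in> dyadics" if "n < k" for k
  proof -
    define b where "b = a * 2 ^ (k - n) + 1"
    have pow_k: "(2::'a::semiring_1) ^ k = 2 ^ n * 2 ^ (k - n)"
      using that by (simp flip: power_add)
    have "d + 1 / 2 ^ k = real b / 2 ^ k"
      unfolding b_def d pow_k by (simp add: field_simps)
    moreover have "b \<le> 2 ^ k - 1"
    proof -
      have "(0::nat) < 2 ^ n" by simp
      with \<open>a \<le> 2 ^ n - 1\<close> have "a + 1 \<le> 2 ^ n" by linarith
      then have "(a + 1) * 2 ^ (k - n) \<le> 2 ^ k"
        unfolding pow_k by (rule mult_right_mono) simp
      moreover have "2 ^ 1 \<le> (2::nat) ^ (k - n)"
        using that by (intro power_increasing) simp_all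
      ultimately show ?thesis by (simp add: b_def algebra_simps)
    qed
    ultimately show ?thesis
      using \<open>1 \<le> n\<close> that unfolding dyadics_def by (intro CollectI exI[of _ b] exI[of _ k]) auto
  qed
  then show ?thesis by (auto simp: eventually_sequentially intro!: exI[of _ "Suc n"])
qed

lemma infinite_dyadics_right:
  assumes "d \<in> dyadics" and "d < h"
  shows "infinite (dyadics \<inter> {d<..<h})"
proof -
  have "(\<lambda>k. inverse (2 ^ k) :: real) \<longlonglongrightarrow> 0" by (rule LIMSEQ_inverse_realpow_zero) simp
  from order_tendstoD(2)[OF this, of "h - d"]
  have "eventually (\<lambda>k. 1 / 2 ^ k < h - d) sequentially"
    using \<open>d < h\<close> by (simp add: divide_inverse)
  with eventually_dyadics_add_inverse_pow[OF \<open>d \<in> dyadics\<close>]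
  have "eventually (\<lambda>k. d + 1 / 2 ^ k \<in> dyadics \<inter> {d<..<h}) sequentially"
    by eventually_elim auto
  then obtain K where K: "(\<lambda>k. d + 1 / 2 ^ k) ` {K..} \<subseteq> dyadics \<inter> {d<..<h}"
    by (auto simp: eventually_sequentially image_subset_iff)
  have "inj (\<lambda>k. d + 1 / 2 ^ k :: real)"
    by (rule injI) simp
  then have "infinite ((\<lambda>k. d + 1 / 2 ^ k :: real) ` {K..})"
    using finite_imageD[OF _ inj_on_subset] infinite_Ici by blast
  with K show ?thesis by (meson finite_subset)
qed

lemma std_dyadic_partition_cell:
  assumes ds: "std_dyadic_partition ds" and "0 \<le> x" "x < 1"
  obtains j where "j + 1 < length ds" "ds ! j \<le> x" "x < ds ! (j + 1)"
proof -
  have len: "2 \<le> length ds" and first: "ds ! 0 = 0" and "last ds = 1"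
    using ds by (auto simp: std_dyadic_partition_def)
  define S where "S = {j. j + 1 < length ds \<and> ds ! j \<le> x}"
  have "finite S" by (rule finite_subset[of _ "{..<length ds}"]) (auto simp: S_def)
  moreover have "0 \<in> S" using len first \<open>0 \<le> x\<close> by (auto simp: S_def)
  ultimately have "Max S \<in> S" and Max_ge: "\<And>j. j \<in> S \<Longrightarrow> j \<le> Max S"
    using Max_in by auto
  moreover have "x < ds ! (Max S + 1)"
  proof (cases "Max S + 2 < length ds")
    case True
    then have "Max S + 1 \<notin> S" using Max_ge[of "Max S + 1"] by auto
    with True show ?thesis by (auto simp: S_def)
  next
    case False
    with \<open>Max S \<in> S\<close> have "Max S + 1 = length ds - 1" by (auto simp: S_def)
    moreover have "ds \<noteq> []" using len by auto
    ultimately have "ds ! (Max S + 1) = last ds" by (simp add: last_conv_nth)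
    with \<open>last ds = 1\<close> \<open>x < 1\<close> show ?thesis by simp
  qed
  ultimately show ?thesis by (intro that[of "Max S"]) (simp_all add: S_def)
qed

lemma Gfr_locally_constant_right:
  assumes "g \<in> Gfr" and "d \<in> dyadics"
  obtains h where "d < h" and "\<And>d'. d' \<in> dyadics \<Longrightarrow> d \<le> d' \<Longrightarrow> d' < h \<Longrightarrow> g d' = g d"
proof -
  obtain ds where ds: "std_dyadic_partition ds"
    and const: "\<And>j. j + 1 < length ds \<Longrightarrow>
                  \<exists>c. \<forall>d\<in>dyadics. ds ! j \<le> d \<and> d < ds ! (j + 1) \<longrightarrow> g d = c"
    using \<open>g \<in> Gfr\<close> by (auto simp: Gfr_def)
  obtain j where j: "j + 1 < length ds" "ds ! j \<le> d" "d < ds ! (j + 1)"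
  proof (rule std_dyadic_partition_cell[OF ds])
    show "0 \<le> d" "d < 1" using dyadics_subset \<open>d \<in> dyadics\<close> by auto
  qed
  obtain c where "\<forall>d\<in>dyadics. ds ! j \<le> d \<and> d < ds ! (j + 1) \<longrightarrow> g d = c"
    using const[OF j(1)] by blast
  with j \<open>d \<in> dyadics\<close> show ?thesis
    by (intro that[of "ds ! (j + 1)"]) simp_all
qed

lemma sets_translate [simp]: "sets (translate c m) = sets m"
  by (simp add: translate_def)

lemma prob_space_translate:
  assumes "prob_space m" and "sets m = sets (count_space UNIV)"
  shows "prob_space (translate c m)"
  unfolding translate_def
  by (rule prob_space.prob_space_distr) (simp_all add: assms measurable_cong_sets[OF assms(2) assms(2)])

lemma push_fr_eq_PiM_translate:
  assumes "prob_space m" and "sets m = sets (count_space UNIV)"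
  shows "push_fr g m = PiM dyadics (\<lambda>d. translate (g d) m)"
  unfolding push_fr_def prodD_def translate_def
  by (rule distr_PiM_coordinatewise) (simp_all add: assms measurable_cong_sets[OF assms(2) assms(2)])

lemma push_fr_cong:
  assumes "prob_space m" "sets m = sets (count_space UNIV)"
    and "\<And>d. d \<in> dyadics \<Longrightarrow> translate (g d) m = translate (g' d) m"
  shows "push_fr g m = push_fr g' m"
  unfolding push_fr_eq_PiM_translate[OF assms(1,2)] by (rule PiM_cong) (simp_all add: assms(3))

lemma push_fr_mutually_singular_of_seq:
  fixes m :: "'g::ab_group_add measure" and e :: "nat \<Rightarrow> real"
  assumes m: "prob_space m" "sets m = sets (count_space UNIV)"
    and e: "inj e" "range e \<subseteq> dyadics" "\<And>i. g (e i) = c" "\<And>i. g' (e i) = c'"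
    and differ: "translate c m \<noteq> translate c' m"
  shows "mutually_singular (push_fr g m) (push_fr g' m)"
proof -
  let ?K = "PiM UNIV (\<lambda>_::nat. translate c m)" and ?t = "\<lambda>\<omega>. \<lambda>n\<in>UNIV. \<omega> (e n)"
  have prob: "prob_space (translate b m)" for b by (rule prob_space_translate[OF m])
  have reindex: "distr (push_fr h m) ?K ?t = PiM UNIV (\<lambda>_::nat. translate b m)"
    if "\<And>i. h (e i) = b" for h b
  proof -
    have "distr (push_fr h m) ?K ?t
        = distr (push_fr h m) (PiM UNIV (\<lambda>i. translate (h (e i)) m)) ?t"
      by (intro distr_cong refl sets_PiM_cong) simp_all
    also have "\<dots> = PiM UNIV (\<lambda>i. translate (h (e i)) m)"
      unfolding push_fr_eq_PiM_translate[OF m]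
      using distr_PiM_reindex[of dyadics "\<lambda>d. translate (h d) m" e UNIV] prob e(1,2) by auto
    finally show ?thesis by (simp add: that)
  qed
  have sets_push: "sets (push_fr g m) = sets (push_fr g' m)"
    unfolding push_fr_eq_PiM_translate[OF m] by (rule sets_PiM_cong) simp_all
  have "?t \<in> measurable (push_fr g m) ?K"
    unfolding push_fr_eq_PiM_translate[OF m]
  proof (rule measurable_restrict)
    fix n
    have "(\<lambda>\<omega>. \<omega> (e n))
        \<in> measurable (PiM dyadics (\<lambda>d. translate (g d) m)) (translate (g (e n)) m)"
      using e(2) by (intro measurable_component_singleton) auto
    then show "(\<lambda>\<omega>. \<omega> (e n)) \<in> measurable (PiM dyadics (\<lambda>d. translate (g d) m)) (translate c m)"
      by (simp add: e(3))
  qed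
  moreover have "mutually_singular (distr (push_fr g m) ?K ?t) (distr (push_fr g' m) ?K ?t)"
    unfolding reindex[of g c, OF e(3)] reindex[of g' c', OF e(4)]
    by (rule PiM_iid_mutually_singular) (simp_all add: prob differ)
  ultimately show ?thesis by (rule mutually_singular_vimage[OF sets_push])
qed

lemma push_fr_mutually_singular_iff:
  fixes m :: "'g::ab_group_add measure"
  assumes m: "prob_space m" "sets m = sets (count_space UNIV)" and "g \<in> Gfr" "g' \<in> Gfr"
  shows "mutually_singular (push_fr g m) (push_fr g' m) \<longleftrightarrow>
           (\<exists>d\<in>dyadics. translate (g d) m \<noteq> translate (g' d) m)"
proof
  assume singular: "mutually_singular (push_fr g m) (push_fr g' m)"
  interpret prob_space "push_fr g' m"
    unfolding push_fr_eq_PiM_translate[OF m]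
    by (rule prob_space_PiM) (rule prob_space_translate[OF m])
  show "\<exists>d\<in>dyadics. translate (g d) m \<noteq> translate (g' d) m"
  proof (rule ccontr)
    assume "\<not> ?thesis"
    then have "push_fr g m = push_fr g' m" by (intro push_fr_cong[OF m]) auto
    with singular not_mutually_singular_self[of "push_fr g' m"] show False
      by (simp add: emeasure_space_1)
  qed
next
  assume "\<exists>d\<in>dyadics. translate (g d) m \<noteq> translate (g' d) m"
  then obtain d where "d \<in> dyadics" and differ: "translate (g d) m \<noteq> translate (g' d) m" by blast
  obtain h where "d < h"
    and g_const: "\<And>d'. d' \<in> dyadics \<Longrightarrow> d \<le> d' \<Longrightarrow> d' < h \<Longrightarrow> g d' = g d"
    using Gfr_locally_constant_right[OF \<open>g \<in> Gfr\<close> \<open>d \<in> dyadics\<close>] by blast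
  obtain h' where "d < h'"
    and g'_const: "\<And>d'. d' \<in> dyadics \<Longrightarrow> d \<le> d' \<Longrightarrow> d' < h' \<Longrightarrow> g' d' = g' d"
    using Gfr_locally_constant_right[OF \<open>g' \<in> Gfr\<close> \<open>d \<in> dyadics\<close>] by blast
  have "infinite (dyadics \<inter> {d<..<min h h'})"
    using infinite_dyadics_right[OF \<open>d \<in> dyadics\<close>] \<open>d < h\<close> \<open>d < h'\<close> by simp
  then obtain e :: "nat \<Rightarrow> real" where "inj e" and e: "range e \<subseteq> dyadics \<inter> {d<..<min h h'}"
    unfolding infinite_iff_countable_subset by blast
  show "mutually_singular (push_fr g m) (push_fr g' m)"
  proof (rule push_fr_mutually_singular_of_seq[OF m \<open>inj e\<close> _ _ _ differ])
    show "range e \<subseteq> dyadics" using e by blast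
    have "e i \<in> dyadics" "d < e i" "e i < h" "e i < h'" for i
      using e by (auto simp: image_subset_iff)
    then show "g (e i) = g d" "g' (e i) = g' d" for i
      using g_const g'_const less_imp_le by blast+
  qed
qed

section \<open>Translates in torsion-free groups\<close>

lemma torsion_free_inj_multiples:
  fixes h :: "'g::ab_group_add"
  assumes "torsion_free TYPE('g)" and "h \<noteq> 0"
  shows "inj (\<lambda>n::nat. \<Sum>i<n. h)"
proof (rule linorder_injI)
  fix a b :: nat assume "a < b"
  have split: "(\<Sum>i<a + k. h) = (\<Sum>i<a. h) + (\<Sum>i<k. h)" for k
    by (induction k) (simp_all add: add.assoc)
  show "(\<Sum>i<a. h) \<noteq> (\<Sum>i<b. h)"
  proof
    assume "(\<Sum>i<a. h) = (\<Sum>i<b. h)"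
    with split[of "b - a"] \<open>a < b\<close> have "(\<Sum>i<b - a. h) = 0" by simp
    with assms \<open>a < b\<close> show False
      unfolding torsion_free_def by (metis zero_less_diff)
  qed
qed

lemma (in prob_space) prob_eq_0_if_inj_atoms:
  fixes f :: "nat \<Rightarrow> 'a"
  assumes "inj f" and "\<And>n. {f n} \<in> events" and "\<And>n. prob {f n} = p"
  shows "p = 0"
proof -
  have "real N * p \<le> 1" for N
  proof -
    have "real N * p = (\<Sum>x\<in>f ` {..<N}. prob {x})"
      using assms by (simp add: sum.reindex inj_on_subset)
    also have "\<dots> = prob (f ` {..<N})"
      using assms by (intro finite_measure_eq_sum_singleton[symmetric]) auto
    finally show ?thesis by simp
  qed
  moreover have "p \<ge> 0" using assms(3)[of 0] by auto
  ultimately show "p = 0"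
    by (metis ex_less_of_nat_mult less_le not_le mult.commute)
qed

lemma translate_eq_imp_eq:
  fixes m :: "'g::ab_group_add measure"
  assumes m: "prob_space m" "sets m = sets (count_space UNIV)"
    and pos: "\<And>x. emeasure m {x} > 0" and "torsion_free TYPE('g)"
    and "translate c m = translate c' m"
  shows "c = c'"
proof (rule ccontr)
  interpret prob_space m by (rule m(1))
  assume "c \<noteq> c'"
  have space: "space m = UNIV" using sets_eq_imp_space_eq[OF m(2)] by simp
  have translate_atom: "measure (translate b m) {x} = prob {x - b}" for b x
  proof -
    have "(\<lambda>y. b + y) -` {x} \<inter> space m = {x - b}" by (auto simp: space algebra_simps)
    then show ?thesis
      unfolding translate_def using m(2)
      by (subst measure_distr) (simp_all add: measurable_cong_sets[OF m(2) m(2)])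
  qed
  define h where "h = c - c'"
  have shift: "prob {x + h} = prob {x}" for x
    using translate_atom[of c "x + c"] translate_atom[of c' "x + c"]
      \<open>translate c m = translate c' m\<close>
    by (simp add: h_def algebra_simps)
  have "prob {\<Sum>i<n. h} = prob {0}" for n :: nat
    by (induction n) (simp_all add: shift)
  moreover have "h \<noteq> 0" using \<open>c \<noteq> c'\<close> by (simp add: h_def)
  ultimately have "prob {0} = 0"
    using torsion_free_inj_multiples[OF \<open>torsion_free TYPE('g)\<close>] m(2)
    by (intro prob_eq_0_if_inj_atoms[where f = "\<lambda>n. \<Sum>i<n. h"]) simp_all
  with pos[of 0] show False by (simp add: emeasure_eq_measure)
qed

theorem lemma3p9:
  fixes m :: "'g::{ab_group_add, countable} measure"
  assumes "prob_space m"
    and "sets m = sets (count_space UNIV)"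
    and "\<And>c. emeasure m {c} > 0"
  shows "(\<forall>g\<in>Gfr. \<forall>g'\<in>Gfr.
            (mutually_singular (push_fr g m) (push_fr g' m) \<longleftrightarrow>
               (\<exists>d\<in>dyadics. translate (g d) m \<noteq> translate (g' d) m)) \<and>
            ((\<forall>d\<in>dyadics. translate (g d) m = translate (g' d) m) \<longrightarrow>
               push_fr g m = push_fr g' m))
       \<and> (torsion_free TYPE('g) \<longrightarrow>
            (\<forall>g\<in>Gfr. \<forall>g'\<in>Gfr. g \<noteq> g' \<longrightarrow> mutually_singular (push_fr g m) (push_fr g' m)))"
proof (intro conjI ballI impI)
  fix g g' :: "real \<Rightarrow> 'g" assume "g \<in> Gfr" "g' \<in> Gfr"
  show "mutually_singular (push_fr g m) (push_fr g' m) \<longleftrightarrow>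
          (\<exists>d\<in>dyadics. translate (g d) m \<noteq> translate (g' d) m)"
    by (rule push_fr_mutually_singular_iff) fact+
  show "\<forall>d\<in>dyadics. translate (g d) m = translate (g' d) m \<Longrightarrow> push_fr g m = push_fr g' m"
    by (rule push_fr_cong[OF assms(1,2)]) simp
next
  fix g g' :: "real \<Rightarrow> 'g"
  assume "torsion_free TYPE('g)" and "g \<in> Gfr" "g' \<in> Gfr" "g \<noteq> g'"
  moreover have "g \<in> extensional dyadics" "g' \<in> extensional dyadics"
    using \<open>g \<in> Gfr\<close> \<open>g' \<in> Gfr\<close> by (auto simp: Gfr_def)
  ultimately obtain d where "d \<in> dyadics" "g d \<noteq> g' d"
    using extensionalityI by blast
  then have "translate (g d) m \<noteq> translate (g' d) m"
    using translate_eq_imp_eq[OF assms \<open>torsion_free TYPE('g)\<close>] by blast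
  with \<open>d \<in> dyadics\<close> show "mutually_singular (push_fr g m) (push_fr g' m)"
    using push_fr_mutually_singular_iff[OF assms(1,2) \<open>g \<in> Gfr\<close> \<open>g' \<in> Gfr\<close>] by blast
qed

end
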